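(* Let $M$ be a real representable (loopless) matroid. Then $M$ is strictly uniformly dense if and only if $M$ has a representation $X$ such that the measure $\mu_X$ on the bases defined by $\mu_X(B)=\det(X_B)^2$ satisfies: $\mu_X(\{B: B\ni e\})$ is the same for all $e\in E$.
   Context: A matroid $M$ on ground set $E$ ($|E|=n$) of rank $k$ is real representable if there is a real full-rank $k\times n$ matrix $X$ (a representation) with columns indexed by $E$ such that a $k$-subset $B$ is a basis iff $\det(X_B)\ne0$, $X_B$ the submatrix on columns $B$. Density $\rho=|E|/k$. $M$ is strictly uniformly dense if $(\rho^{-1},\dots,\rho^{-1})$ lies in the relative interior of the base polytope (convex hull of basis indicator vectors); equivalently there is a measure $\mu$ with $\mu(B)>0$ for every basis such that $\mu(\{B:B\ni e\})$ is independent of $e\in E$. *)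

theory Defs
  imports "HOL-Analysis.Analysis"
begin

text \<open>Ground set E = UNIV :: 'e set (finite type), rank k = CARD('k).
  A matroid is given by its set of bases. A representation is a real
  k x n matrix X :: real^'e^'k (rows indexed by 'k, columns by 'e).\<close>

definition col_submatrix :: "real^'e^'k \<Rightarrow> ('k \<Rightarrow> 'e) \<Rightarrow> real^'k^'k" where
  "col_submatrix X f = (\<chi> i j. X $ i $ (f j))"

text \<open>det(X_B): determinant of the k x k submatrix on the columns B, the columns
  listed via a fixed (chosen) bijection from 'k onto B; it is well defined up to sign,
  which is irrelevant for whether it vanishes and for its square.\<close>
definition detB :: "real^'e^'k \<Rightarrow> 'e set \<Rightarrow> real" where
  "detB X B = det (col_submatrix X (SOME f. bij_betw f (UNIV :: 'k set) B))"

definition is_representation :: "real^'e^'k \<Rightarrow> 'e set set \<Rightarrow> bool" where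
  "is_representation X bases \<longleftrightarrow>
     rank X = CARD('k) \<and>
     (\<forall>B. card B = CARD('k) \<longrightarrow> (B \<in> bases \<longleftrightarrow> detB X B \<noteq> 0))"

definition real_representable :: "'k::finite itself \<Rightarrow> 'e::finite set set \<Rightarrow> bool" where
  "real_representable _ bases \<longleftrightarrow> (\<exists>X :: real^'e^'k. is_representation X bases)"

definition loopless :: "'e set set \<Rightarrow> bool" where
  "loopless bases \<longleftrightarrow> (\<forall>e. \<exists>B\<in>bases. e \<in> B)"

definition indvec :: "'e::finite set \<Rightarrow> real^'e" where
  "indvec B = (\<chi> e. if e \<in> B then 1 else 0)"

definition base_polytope :: "'e::finite set set \<Rightarrow> (real^'e) set" where
  "base_polytope bases = convex hull (indvec ` bases)"

text \<open>Strictly uniformly dense, for a matroid of rank k: (1/rho,...,1/rho), rho = n/k,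
  lies in the relative interior of the base polytope.\<close>
definition strictly_uniformly_dense :: "nat \<Rightarrow> 'e::finite set set \<Rightarrow> bool" where
  "strictly_uniformly_dense k bases \<longleftrightarrow>
     (\<chi> e. real k / real CARD('e)) \<in> rel_interior (base_polytope bases)"

end

theory Submission
  imports Defs
begin

text \<open>Rescaling the columns of a representation X by s multiplies \<open>det(X\<^sub>B)\<^sup>2\<close> by
  \<open>\<Prod>\<^sub>e\<^sub>\<in>\<^sub>B s\<^sub>e\<^sup>2\<close>, so the column rescalings of one representation X realise all the
  measures \<open>w(B) exp(\<langle>1\<^sub>B, y\<rangle>)\<close>, \<open>y \<in> \<real>\<^sup>E\<close>, where \<open>w(B) = det(X\<^sub>B)\<^sup>2\<close>.
  Uniform marginals of a positive measure on the bases say that its normalised barycenter in the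
  base polytope is the uniform point, so one direction is immediate. Conversely, if the uniform
  point p is a positive convex combination of the basis vectors, minimising the convex function
  \<open>y \<mapsto> \<Sum>\<^sub>B w(B) exp(\<langle>1\<^sub>B - p, y\<rangle>)\<close> gives a tilt whose barycenter is p: the function
  is invariant under the orthogonal complement of the span of the \<open>1\<^sub>B - p\<close>, and on that span it
  grows linearly because the \<open>1\<^sub>B - p\<close> are positively dependent. At the minimum the gradient,
  which is the first moment of the tilted measure about p, vanishes.\<close>

lemma homogeneous_positive_ge_norm:
  fixes \<phi> :: "'a::euclidean_space \<Rightarrow> real"
  assumes "subspace L" and "continuous_on L \<phi>"
    and homogeneous: "\<And>r u. r > 0 \<Longrightarrow> u \<in> L \<Longrightarrow> \<phi> (r *\<^sub>R u) = r * \<phi> u"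
    and positive: "\<And>u. u \<in> L \<Longrightarrow> u \<noteq> 0 \<Longrightarrow> \<phi> u > 0"
  shows "\<exists>\<delta>>0. \<forall>u\<in>L. \<delta> * norm u \<le> \<phi> u"
proof (cases "L \<inter> sphere 0 1 = {}")
  case True
  have "u = 0" if "u \<in> L" for u
  proof (rule ccontr)
    assume "u \<noteq> 0"
    then have "(1 / norm u) *\<^sub>R u \<in> L \<inter> sphere 0 1"
      using that \<open>subspace L\<close> by (auto simp: subspace_scale)
    with True show False by blast
  qed
  moreover have "\<phi> 0 = 0"
    using homogeneous[of 2 0] \<open>subspace L\<close> by (simp add: subspace_0)
  ultimately show ?thesis by (intro exI[of _ 1]) force
next
  case False
  have "compact (L \<inter> sphere 0 1)"
    using \<open>subspace L\<close> by (intro closed_Int_compact closed_subspace compact_sphere)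
  then obtain u0 where u0: "u0 \<in> L \<inter> sphere 0 1" and min: "\<forall>u\<in>L \<inter> sphere 0 1. \<phi> u0 \<le> \<phi> u"
    using continuous_attains_inf[OF _ False] continuous_on_subset[OF \<open>continuous_on L \<phi>\<close>]
    by (metis inf_le1)
  have "\<phi> u0 * norm u \<le> \<phi> u" if "u \<in> L" for u
  proof (cases "u = 0")
    case True
    then show ?thesis
      using homogeneous[of 2 0] \<open>subspace L\<close> by (simp add: subspace_0)
  next
    case False
    then have "(1 / norm u) *\<^sub>R u \<in> L \<inter> sphere 0 1"
      using that \<open>subspace L\<close> by (auto simp: subspace_scale)
    then have "\<phi> u0 \<le> \<phi> ((1 / norm u) *\<^sub>R u)" using min by blast
    also have "\<dots> = \<phi> u / norm u" using homogeneous[of "1 / norm u" u] False that by simp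
    finally show ?thesis using False by (simp add: field_simps)
  qed
  moreover have "\<phi> u0 > 0" using positive u0 by force
  ultimately show ?thesis by blast
qed

lemma positive_dependence_inner_nonpos_eq_0:
  fixes a :: "'i \<Rightarrow> 'a::real_inner"
  assumes "finite I" and "\<forall>i\<in>I. c i > 0" and "(\<Sum>i\<in>I. c i *\<^sub>R a i) = 0"
    and nonpos: "\<forall>i\<in>I. a i \<bullet> u \<le> 0"
  shows "\<forall>i\<in>I. a i \<bullet> u = 0"
proof -
  have "(\<Sum>i\<in>I. c i * (a i \<bullet> u)) = 0"
    using arg_cong[OF assms(3), of "\<lambda>x. x \<bullet> u"] by (simp add: inner_sum_left)
  then have "(\<Sum>i\<in>I. - (c i * (a i \<bullet> u))) = 0"
    by (simp add: sum_negf)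
  moreover have "\<forall>i\<in>I. 0 \<le> - (c i * (a i \<bullet> u))"
    using assms(2) nonpos by (simp add: mult_nonneg_nonpos less_imp_le)
  ultimately have "\<forall>i\<in>I. c i * (a i \<bullet> u) = 0"
    using sum_nonneg_eq_0_iff[OF \<open>finite I\<close>, of "\<lambda>i. - (c i * (a i \<bullet> u))"] by simp
  then show ?thesis using assms(2) by force
qed

lemma positive_part_sum_ge_norm:
  fixes a :: "'i \<Rightarrow> 'a::euclidean_space"
  assumes "finite I" and "\<forall>i\<in>I. w i > 0" and "\<forall>i\<in>I. c i > 0" and "(\<Sum>i\<in>I. c i *\<^sub>R a i) = 0"
  shows "\<exists>\<delta>>0. \<forall>u\<in>span (a ` I). \<delta> * norm u \<le> (\<Sum>i\<in>I. w i * max 0 (a i \<bullet> u))"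
proof (rule homogeneous_positive_ge_norm)
  show "(\<Sum>i\<in>I. w i * max 0 (a i \<bullet> (r *\<^sub>R u))) = r * (\<Sum>i\<in>I. w i * max 0 (a i \<bullet> u))"
    if "r > 0" for r and u :: 'a
    unfolding sum_distrib_left using that
    by (intro sum.cong) (auto simp: max_def mult_le_0_iff zero_le_mult_iff)
  show "(\<Sum>i\<in>I. w i * max 0 (a i \<bullet> u)) > 0" if u: "u \<in> span (a ` I)" "u \<noteq> 0" for u
  proof (rule ccontr)
    assume "\<not> ?thesis"
    moreover have "\<forall>i\<in>I. 0 \<le> w i * max 0 (a i \<bullet> u)"
      using assms(2) by (simp add: less_imp_le)
    ultimately have "\<forall>i\<in>I. w i * max 0 (a i \<bullet> u) = 0"
      using sum_nonneg_eq_0_iff[OF \<open>finite I\<close>] sum_nonneg[of I]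
      by (metis (no_types, lifting) not_less order.antisym)
    then have "\<forall>i\<in>I. a i \<bullet> u \<le> 0" using assms(2) by (metis max.cobounded2 mult_eq_0_iff less_irrefl)
    then have "\<forall>i\<in>I. a i \<bullet> u = 0" using positive_dependence_inner_nonpos_eq_0 assms(1,3,4) by blast
    then have "u \<bullet> u = 0"
      using orthogonal_to_span[OF u(1), of u] by (force simp: orthogonal_def inner_commute)
    with u(2) show False by simp
  qed
qed (intro continuous_intros subspace_span)+

lemma sum_exp_inner_ge_norm:
  fixes a :: "'i \<Rightarrow> 'a::euclidean_space"
  assumes "finite I" and w: "\<forall>i\<in>I. w i > 0" and "\<forall>i\<in>I. c i > 0" and "(\<Sum>i\<in>I. c i *\<^sub>R a i) = 0"
  shows "\<exists>\<delta>>0. \<forall>u\<in>span (a ` I). \<delta> * norm u \<le> (\<Sum>i\<in>I. w i * exp (a i \<bullet> u))"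
proof -
  obtain \<delta> where "\<delta> > 0" and \<delta>: "\<forall>u\<in>span (a ` I). \<delta> * norm u \<le> (\<Sum>i\<in>I. w i * max 0 (a i \<bullet> u))"
    using positive_part_sum_ge_norm[OF assms] by blast
  have "max 0 t \<le> exp t" for t :: real
  proof -
    have "t \<le> exp t" using exp_ge_add_one_self[of t] by linarith
    then show ?thesis by (simp add: less_imp_le)
  qed
  then have "(\<Sum>i\<in>I. w i * max 0 (a i \<bullet> u)) \<le> (\<Sum>i\<in>I. w i * exp (a i \<bullet> u))" for u
    using w by (intro sum_mono mult_left_mono) (auto simp: less_imp_le)
  with \<open>\<delta> > 0\<close> \<delta> show ?thesis by (meson order.trans)
qed

lemma sum_exp_inner_attains_min:
  fixes a :: "'i \<Rightarrow> 'a::euclidean_space"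
  assumes "finite I" and w: "\<forall>i\<in>I. w i > 0" and "\<forall>i\<in>I. c i > 0" and "(\<Sum>i\<in>I. c i *\<^sub>R a i) = 0"
  shows "\<exists>y0. \<forall>y. (\<Sum>i\<in>I. w i * exp (a i \<bullet> y0)) \<le> (\<Sum>i\<in>I. w i * exp (a i \<bullet> y))"
proof -
  define F where "F y = (\<Sum>i\<in>I. w i * exp (a i \<bullet> y))" for y
  define L where "L = span (a ` I)"
  obtain \<delta> where "\<delta> > 0" and \<delta>: "\<forall>u\<in>L. \<delta> * norm u \<le> F u"
    unfolding F_def L_def using sum_exp_inner_ge_norm[OF assms] by blast
  define R where "R = F 0 / \<delta>"
  have "F 0 \<ge> 0"
    unfolding F_def using w by (intro sum_nonneg) (simp add: less_imp_le)
  then have "0 \<in> L \<inter> cball 0 R"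
    using \<open>\<delta> > 0\<close> by (simp add: L_def R_def span_zero)
  moreover have "compact (L \<inter> cball 0 R)"
    unfolding L_def by (intro closed_Int_compact closed_span compact_cball)
  moreover have "continuous_on (L \<inter> cball 0 R) F"
    unfolding F_def by (intro continuous_intros)
  ultimately obtain y0 where "y0 \<in> L \<inter> cball 0 R" and y0: "\<forall>y\<in>L \<inter> cball 0 R. F y0 \<le> F y"
    using continuous_attains_inf by blast
  have "F y0 \<le> F y" for y
  proof -
    obtain yL z where "yL \<in> L" and z: "\<And>u. u \<in> L \<Longrightarrow> orthogonal z u" and "y = yL + z"
      using orthogonal_subspace_decomp_exists[of "a ` I" y] unfolding L_def by metis
    have "a i \<bullet> z = 0" if "i \<in> I" for i
      using z[of "a i"] that by (auto simp: L_def span_base orthogonal_def inner_commute)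
    then have "F y = F yL"
      unfolding F_def \<open>y = yL + z\<close> by (intro sum.cong) (auto simp: inner_add_right)
    moreover have "F y0 \<le> F yL"
    proof (cases "norm yL \<le> R")
      case True
      with \<open>yL \<in> L\<close> y0 show ?thesis by auto
    next
      case False
      then have "F 0 < F yL"
        using \<delta> \<open>yL \<in> L\<close> \<open>\<delta> > 0\<close> by (auto simp: R_def field_simps)
      moreover have "F y0 \<le> F 0" using \<open>0 \<in> L \<inter> cball 0 R\<close> y0 by blast
      ultimately show ?thesis by linarith
    qed
    ultimately show ?thesis by simp
  qed
  then show ?thesis unfolding F_def by blast
qed

lemma sum_exp_inner_min_gradient:
  fixes a :: "'i \<Rightarrow> 'a::euclidean_space"
  assumes min: "\<forall>y. (\<Sum>i\<in>I. w i * exp (a i \<bullet> y0)) \<le> (\<Sum>i\<in>I. w i * exp (a i \<bullet> y))"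
  shows "(\<Sum>i\<in>I. (w i * exp (a i \<bullet> y0)) *\<^sub>R a i) = 0"
proof -
  define g where "g = (\<Sum>i\<in>I. (w i * exp (a i \<bullet> y0)) *\<^sub>R a i)"
  define h where "h t = (\<Sum>i\<in>I. w i * exp (a i \<bullet> (y0 + t *\<^sub>R g)))" for t
  have "DERIV h 0 :> (\<Sum>i\<in>I. w i * exp (a i \<bullet> y0) * (a i \<bullet> g))"
    unfolding h_def inner_add_right inner_scaleR_right
    by (auto intro!: derivative_eq_intros sum.cong)
  moreover have "(\<Sum>i\<in>I. w i * exp (a i \<bullet> y0) * (a i \<bullet> g)) = g \<bullet> g"
    by (simp add: g_def inner_sum_left)
  moreover have "\<forall>t. \<bar>0 - t\<bar> < 1 \<longrightarrow> h 0 \<le> h t"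
    using min by (simp add: h_def)
  ultimately have "g \<bullet> g = 0"
    using DERIV_local_min[OF _ zero_less_one] by metis
  then show ?thesis by (simp add: g_def)
qed

lemma exp_tilt_barycenter:
  fixes v :: "'i \<Rightarrow> 'a::euclidean_space"
  assumes "finite I" and "\<forall>i\<in>I. w i > 0" and \<mu>: "\<forall>i\<in>I. \<mu> i > 0"
  shows "\<exists>y. sum \<mu> I *\<^sub>R (\<Sum>i\<in>I. (w i * exp (v i \<bullet> y)) *\<^sub>R v i)
           = (\<Sum>i\<in>I. w i * exp (v i \<bullet> y)) *\<^sub>R (\<Sum>i\<in>I. \<mu> i *\<^sub>R v i)"
proof (cases "I = {}")
  case False
  define M where "M = sum \<mu> I"
  have "M > 0"
    unfolding M_def using False \<mu> \<open>finite I\<close> by (simp add: sum_pos)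
  define p where "p = (1 / M) *\<^sub>R (\<Sum>i\<in>I. \<mu> i *\<^sub>R v i)"
  have centred: "(\<Sum>i\<in>I. c i *\<^sub>R (v i - p)) = (\<Sum>i\<in>I. c i *\<^sub>R v i) - sum c I *\<^sub>R p" for c
    by (simp add: scaleR_diff_right sum_subtractf scaleR_left.sum)
  have "(\<Sum>i\<in>I. \<mu> i *\<^sub>R (v i - p)) = 0"
    unfolding centred using \<open>M > 0\<close> by (simp add: p_def M_def)
  then obtain y where "\<forall>y'. (\<Sum>i\<in>I. w i * exp ((v i - p) \<bullet> y)) \<le> (\<Sum>i\<in>I. w i * exp ((v i - p) \<bullet> y'))"
    using sum_exp_inner_attains_min[OF \<open>finite I\<close> assms(2) \<mu>, of "\<lambda>i. v i - p"] by blast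
  then have "(\<Sum>i\<in>I. (w i * exp ((v i - p) \<bullet> y)) *\<^sub>R (v i - p)) = 0"
    by (rule sum_exp_inner_min_gradient)
  then have "exp (p \<bullet> y) *\<^sub>R (\<Sum>i\<in>I. (w i * exp ((v i - p) \<bullet> y)) *\<^sub>R (v i - p)) = 0"
    by simp
  then have "(\<Sum>i\<in>I. (w i * exp (v i \<bullet> y)) *\<^sub>R (v i - p)) = 0"
    unfolding scaleR_sum_right by (simp add: inner_diff_left exp_diff)
  then have "(\<Sum>i\<in>I. (w i * exp (v i \<bullet> y)) *\<^sub>R v i) = (\<Sum>i\<in>I. w i * exp (v i \<bullet> y)) *\<^sub>R p"
    unfolding centred by simp
  then show ?thesis
    using \<open>M > 0\<close> by (intro exI[of _ y]) (simp add: M_def p_def)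
qed simp

definition scale_columns :: "real^'e^'k \<Rightarrow> ('e \<Rightarrow> real) \<Rightarrow> real^'e^'k" where
  "scale_columns X s = (\<chi> i j. X $ i $ j * s j)"

lemma det_col_submatrix_scale_columns:
  "det (col_submatrix (scale_columns X s) f) = det (col_submatrix X f) * (\<Prod>j\<in>UNIV. s (f j))"
proof -
  have "transpose (col_submatrix (scale_columns X s) f) = (\<chi> j. s (f j) *s transpose (col_submatrix X f) $ j)"
    by (simp add: transpose_def col_submatrix_def scale_columns_def vec_eq_iff mult.commute)
  then have "det (col_submatrix (scale_columns X s) f) = det (\<chi> j. s (f j) *s transpose (col_submatrix X f) $ j)"
    by (metis det_transpose)
  also have "\<dots> = (\<Prod>j\<in>UNIV. s (f j)) * det (transpose (col_submatrix X f))"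
    by (simp add: det_rows_mul)
  finally show ?thesis by (simp add: mult.commute)
qed

lemma detB_scale_columns:
  fixes X :: "real^'e::finite^'k::finite"
  assumes "card B = CARD('k)"
  shows "detB (scale_columns X s) B = detB X B * (\<Prod>e\<in>B. s e)"
proof -
  have "\<exists>f. bij_betw f (UNIV :: 'k set) B"
    using assms by (intro finite_same_card_bij) auto
  then have "bij_betw (SOME f. bij_betw f (UNIV :: 'k set) B) UNIV B"
    by (rule someI_ex)
  then show ?thesis
    unfolding detB_def det_col_submatrix_scale_columns by (simp add: prod.reindex_bij_betw)
qed

lemma scale_columns_eq_matrix_mult:
  "scale_columns X s = X ** (\<chi> i j. if i = j then s j else 0)"
  by (simp add: scale_columns_def matrix_matrix_mult_def vec_eq_iff if_distrib sum.delta cong: if_cong)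

lemma rank_scale_columns_le:
  fixes X :: "real^'e::finite^'k::finite"
  shows "rank (scale_columns X s) \<le> rank X"
  unfolding scale_columns_eq_matrix_mult by (rule rank_mul_le_left)

lemma rank_scale_columns:
  fixes X :: "real^'e::finite^'k::finite"
  assumes "\<And>e. s e \<noteq> 0"
  shows "rank (scale_columns X s) = rank X"
proof -
  have "scale_columns (scale_columns X s) (\<lambda>e. 1 / s e) = X"
    using assms by (simp add: scale_columns_def vec_eq_iff)
  then have "rank X \<le> rank (scale_columns X s)"
    by (metis rank_scale_columns_le)
  then show ?thesis
    using rank_scale_columns_le by (rule order.antisym[rotated])
qed

lemma is_representation_scale_columns:
  fixes X :: "real^'e::finite^'k::finite"
  assumes "is_representation X bases" and "\<And>e. s e \<noteq> 0"
  shows "is_representation (scale_columns X s) bases"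
  using assms unfolding is_representation_def
  by (simp add: rank_scale_columns detB_scale_columns[where s = s])

lemma inner_indvec: "indvec B \<bullet> y = (\<Sum>e\<in>B. y $ e)"
proof -
  have "indvec B \<bullet> y = (\<Sum>e\<in>UNIV. if e \<in> B then y $ e else 0)"
    unfolding inner_vec_def indvec_def by (intro sum.cong) auto
  then show ?thesis by (simp add: sum.If_cases)
qed

lemma detB_exp_scale_columns_square:
  fixes X :: "real^'e::finite^'k::finite"
  assumes "card B = CARD('k)"
  shows "(detB (scale_columns X (\<lambda>e. exp (y $ e / 2))) B)\<^sup>2 = (detB X B)\<^sup>2 * exp (indvec B \<bullet> y)"
proof -
  have "(\<Prod>e\<in>B. exp (y $ e / 2))\<^sup>2 = exp (indvec B \<bullet> y)"
    by (simp add: inner_indvec exp_sum power2_eq_square flip: prod.distrib exp_add)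
  then show ?thesis
    by (simp add: detB_scale_columns[OF assms] power_mult_distrib)
qed

definition uniform_marginals :: "'e set set \<Rightarrow> ('e set \<Rightarrow> real) \<Rightarrow> bool" where
  "uniform_marginals bases \<mu> \<longleftrightarrow> (\<exists>c. \<forall>e. (\<Sum>B\<in>{B\<in>bases. e \<in> B}. \<mu> B) = c)"

lemma sum_scaleR_indvec_component:
  fixes bases :: "'e::finite set set"
  shows "(\<Sum>B\<in>bases. \<mu> B *\<^sub>R indvec B) $ e = (\<Sum>B\<in>{B\<in>bases. e \<in> B}. \<mu> B)"
  by (simp add: sum_component indvec_def sum.inter_filter if_distrib cong: if_cong)

lemma sum_of_marginals:
  fixes bases :: "'e::finite set set"
  assumes "\<forall>B\<in>bases. card B = k"
  shows "(\<Sum>e\<in>UNIV. \<Sum>B\<in>{B\<in>bases. e \<in> B}. \<mu> B) = real k * sum \<mu> bases"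
proof -
  have "(\<Sum>e\<in>UNIV. \<Sum>B\<in>{B\<in>bases. e \<in> B}. \<mu> B) = (\<Sum>B\<in>bases. \<Sum>e\<in>{e\<in>UNIV. e \<in> B}. \<mu> B)"
    by (rule sum.swap_restrict) simp_all
  also have "\<dots> = real k * sum \<mu> bases"
    using assms by (simp add: sum_distrib_left)
  finally show ?thesis .
qed

lemma uniform_marginals_iff_barycenter:
  fixes bases :: "'e::finite set set"
  assumes "\<forall>B\<in>bases. card B = k"
  shows "uniform_marginals bases \<mu> \<longleftrightarrow>
    (\<Sum>B\<in>bases. \<mu> B *\<^sub>R indvec B) = sum \<mu> bases *\<^sub>R (\<chi> e. real k / real CARD('e))"
proof
  assume "uniform_marginals bases \<mu>"
  then obtain c where c: "\<And>e. (\<Sum>B\<in>{B\<in>bases. e \<in> B}. \<mu> B) = c"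
    unfolding uniform_marginals_def by blast
  have "real CARD('e) * c = real k * sum \<mu> bases"
    using sum_of_marginals[OF assms, of \<mu>] by (simp add: c)
  then show "(\<Sum>B\<in>bases. \<mu> B *\<^sub>R indvec B) = sum \<mu> bases *\<^sub>R (\<chi> e. real k / real CARD('e))"
  proof (subst vec_eq_iff, intro allI)
    fix e
    show "(\<Sum>B\<in>bases. \<mu> B *\<^sub>R indvec B) $ e = (sum \<mu> bases *\<^sub>R (\<chi> e. real k / real CARD('e))) $ e"
      unfolding sum_scaleR_indvec_component c using \<open>real CARD('e) * c = _\<close> by (simp add: field_simps)
  qed
next
  assume barycenter: "(\<Sum>B\<in>bases. \<mu> B *\<^sub>R indvec B) = sum \<mu> bases *\<^sub>R (\<chi> e. real k / real CARD('e))"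
  have "(\<Sum>B\<in>{B\<in>bases. e \<in> B}. \<mu> B) = sum \<mu> bases * (real k / real CARD('e))" for e
    using arg_cong[OF barycenter, of "\<lambda>x. x $ e"]
    by (simp only: sum_scaleR_indvec_component vector_scaleR_component vec_lambda_beta real_scaleR_def)
  then show "uniform_marginals bases \<mu>"
    unfolding uniform_marginals_def by blast
qed

lemma rel_interior_base_polytope:
  "rel_interior (base_polytope bases) =
    {\<Sum>B\<in>bases. c B *\<^sub>R indvec B | c. (\<forall>B\<in>bases. c B > 0) \<and> sum c bases = 1}"
proof -
  have "indvec ` bases = (\<Union>B\<in>bases. {indvec B})" by auto
  then have "rel_interior (base_polytope bases) =
    {\<Sum>B\<in>bases. c B *\<^sub>R s B | c s. (\<forall>B\<in>bases. c B > 0) \<and> sum c bases = 1 \<and>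
      (\<forall>B\<in>bases. s B \<in> rel_interior {indvec B})}"
    unfolding base_polytope_def by (simp add: rel_interior_convex_hull_union)
  also have "\<dots> = {\<Sum>B\<in>bases. c B *\<^sub>R indvec B | c. (\<forall>B\<in>bases. c B > 0) \<and> sum c bases = 1}"
    by (auto simp: rel_interior_sing cong: sum.cong)
  finally show ?thesis .
qed

lemma strictly_uniformly_dense_iff_uniform_marginals:
  fixes bases :: "'e::finite set set"
  assumes "\<forall>B\<in>bases. card B = k" and "bases \<noteq> {}"
  shows "strictly_uniformly_dense k bases \<longleftrightarrow> (\<exists>\<mu>. (\<forall>B\<in>bases. \<mu> B > 0) \<and> uniform_marginals bases \<mu>)"
proof
  assume "strictly_uniformly_dense k bases"
  then obtain c where "\<forall>B\<in>bases. c B > 0" and "sum c bases = 1"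
    and "(\<chi> e. real k / real CARD('e)) = (\<Sum>B\<in>bases. c B *\<^sub>R indvec B)"
    unfolding strictly_uniformly_dense_def rel_interior_base_polytope by blast
  then show "\<exists>\<mu>. (\<forall>B\<in>bases. \<mu> B > 0) \<and> uniform_marginals bases \<mu>"
    using uniform_marginals_iff_barycenter[OF assms(1)] by auto
next
  assume "\<exists>\<mu>. (\<forall>B\<in>bases. \<mu> B > 0) \<and> uniform_marginals bases \<mu>"
  then obtain \<mu> where \<mu>: "\<forall>B\<in>bases. \<mu> B > 0" and "uniform_marginals bases \<mu>" by blast
  then have barycenter: "(\<Sum>B\<in>bases. \<mu> B *\<^sub>R indvec B) = sum \<mu> bases *\<^sub>R (\<chi> e. real k / real CARD('e))"
    using uniform_marginals_iff_barycenter[OF assms(1)] by blast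
  define M where "M = sum \<mu> bases"
  have "M > 0"
    unfolding M_def using \<mu> assms(2) by (simp add: sum_pos)
  have "(\<Sum>B\<in>bases. (\<mu> B / M) *\<^sub>R indvec B) = (1 / M) *\<^sub>R (\<Sum>B\<in>bases. \<mu> B *\<^sub>R indvec B)"
    by (simp add: scaleR_sum_right)
  also have "\<dots> = (\<chi> e. real k / real CARD('e))"
    using barycenter \<open>M > 0\<close> by (simp add: M_def)
  finally have "(\<chi> e. real k / real CARD('e)) = (\<Sum>B\<in>bases. (\<mu> B / M) *\<^sub>R indvec B)" ..
  moreover have "(\<forall>B\<in>bases. \<mu> B / M > 0) \<and> (\<Sum>B\<in>bases. \<mu> B / M) = 1"
    using \<mu> \<open>M > 0\<close> by (simp add: M_def flip: sum_divide_distrib)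
  ultimately show "strictly_uniformly_dense k bases"
    unfolding strictly_uniformly_dense_def rel_interior_base_polytope
    by (intro CollectI exI[where x = "\<lambda>B. \<mu> B / M"]) blast
qed

lemma uniform_marginals_exp_tilt:
  fixes bases :: "'e::finite set set"
  assumes "\<forall>B\<in>bases. card B = k" and "\<forall>B\<in>bases. \<mu> B > 0" and "uniform_marginals bases \<mu>"
    and "\<forall>B\<in>bases. w B > 0"
  shows "\<exists>y. uniform_marginals bases (\<lambda>B. w B * exp (indvec B \<bullet> y))"
proof (cases "bases = {}")
  case False
  define u :: "real^'e" where "u = (\<chi> e. real k / real CARD('e))"
  have barycenter: "(\<Sum>B\<in>bases. \<mu> B *\<^sub>R indvec B) = sum \<mu> bases *\<^sub>R u"
    using assms(1,3) uniform_marginals_iff_barycenter unfolding u_def by blast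
  obtain y where "sum \<mu> bases *\<^sub>R (\<Sum>B\<in>bases. (w B * exp (indvec B \<bullet> y)) *\<^sub>R indvec B)
      = (\<Sum>B\<in>bases. w B * exp (indvec B \<bullet> y)) *\<^sub>R (\<Sum>B\<in>bases. \<mu> B *\<^sub>R indvec B)"
    using exp_tilt_barycenter[of bases w \<mu> indvec] assms(2,4) by auto
  also have "\<dots> = sum \<mu> bases *\<^sub>R ((\<Sum>B\<in>bases. w B * exp (indvec B \<bullet> y)) *\<^sub>R u)"
    unfolding barycenter by (rule scaleR_left_commute)
  finally have "sum \<mu> bases *\<^sub>R (\<Sum>B\<in>bases. (w B * exp (indvec B \<bullet> y)) *\<^sub>R indvec B)
      = sum \<mu> bases *\<^sub>R ((\<Sum>B\<in>bases. w B * exp (indvec B \<bullet> y)) *\<^sub>R u)" .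
  moreover have "sum \<mu> bases \<noteq> 0"
    using assms(2) False by (simp add: sum_pos less_imp_neq[symmetric])
  ultimately have "(\<Sum>B\<in>bases. (w B * exp (indvec B \<bullet> y)) *\<^sub>R indvec B)
      = (\<Sum>B\<in>bases. w B * exp (indvec B \<bullet> y)) *\<^sub>R u"
    using scaleR_left_imp_eq by blast
  then show ?thesis
    using uniform_marginals_iff_barycenter[OF assms(1)] by (auto simp: u_def)
qed (simp add: uniform_marginals_def)

theorem theorem4p6:
  fixes bases :: "('e::finite) set set"
  assumes rank_k: "\<forall>B\<in>bases. card B = CARD('k::finite)"
    and repr: "real_representable TYPE('k) bases"
    and "loopless bases"
  shows "strictly_uniformly_dense CARD('k) bases \<longleftrightarrow>
    (\<exists>X :: real^'e^'k. is_representation X bases \<and>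
       (\<exists>c. \<forall>e. (\<Sum>B\<in>{B\<in>bases. e \<in> B}. (detB X B)\<^sup>2) = c))"
proof -
  have "bases \<noteq> {}"
    using \<open>loopless bases\<close> unfolding loopless_def by blast
  note sud_iff = strictly_uniformly_dense_iff_uniform_marginals[OF rank_k this]
  have det_pos: "\<forall>B\<in>bases. (detB X B)\<^sup>2 > 0" if "is_representation X bases" for X :: "real^'e^'k"
    using that rank_k unfolding is_representation_def by auto
  show ?thesis
    unfolding uniform_marginals_def[symmetric]
  proof
    assume "strictly_uniformly_dense CARD('k) bases"
    then obtain \<mu> where "\<forall>B\<in>bases. \<mu> B > 0" and "uniform_marginals bases \<mu>"
      using sud_iff by blast
    moreover obtain X :: "real^'e^'k" where X: "is_representation X bases"
      using repr unfolding real_representable_def by blast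
    ultimately obtain y where "uniform_marginals bases (\<lambda>B. (detB X B)\<^sup>2 * exp (indvec B \<bullet> y))"
      using uniform_marginals_exp_tilt[OF rank_k _ _ det_pos[OF X]] by blast
    then have "uniform_marginals bases (\<lambda>B. (detB (scale_columns X (\<lambda>e. exp (y $ e / 2))) B)\<^sup>2)"
      using rank_k unfolding uniform_marginals_def by (simp add: detB_exp_scale_columns_square)
    moreover have "is_representation (scale_columns X (\<lambda>e. exp (y $ e / 2))) bases"
      using X by (rule is_representation_scale_columns) simp
    ultimately show "\<exists>X :: real^'e^'k. is_representation X bases \<and> uniform_marginals bases (\<lambda>B. (detB X B)\<^sup>2)"
      by blast
  next
    assume "\<exists>X :: real^'e^'k. is_representation X bases \<and> uniform_marginals bases (\<lambda>B. (detB X B)\<^sup>2)"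
    then obtain X :: "real^'e^'k" where X: "is_representation X bases"
      and "uniform_marginals bases (\<lambda>B. (detB X B)\<^sup>2)" by blast
    with det_pos[OF X] show "strictly_uniformly_dense CARD('k) bases"
      unfolding sud_iff by (intro exI[of _ "\<lambda>B. (detB X B)\<^sup>2"] conjI)
  qed
qed

end
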